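(* Let $H$ be an undirected simple graph on a vertex set $V$ with $|V|=n$, and let $\tilde d$ be the average degree of $H$. Let $w$ be chosen uniformly at random from $V$, and let $N_w(H)$ be the graph on vertex set $V$ obtained from $H$ by deleting every edge incident to a vertex of $\Gamma_H(w)$. Then the expected number of edges deleted, $\mathbb{E}\big[|E(H)|-|E(N_w(H))|\big]$, is at least $\binom{\tilde d+1}{2}=\frac{(\tilde d+1)\tilde d}{2}$.
   Context: $\Gamma_H(w)$ denotes the set of neighbours of $w$ in $H$ (not including $w$ itself). In the paper this is applied to a random sequence $G_0=G$, $G_{i+1}=N_{v_{i+1}}(G_i)$, where the $v_i$ are chosen independently and uniformly at random from $V(G_0)$; the statement is that, conditionally on $G_i$ with average degree $\tilde d$, the number of edges decreases in expectation by at least $\binom{\tilde d+1}{2}$ when going from $G_i$ to $G_{i+1}$. *)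

theory Defs
  imports Complex_Main
begin

definition simple_graph :: "'a set \<Rightarrow> 'a set set \<Rightarrow> bool" where
  "simple_graph V E \<longleftrightarrow> finite V \<and> (\<forall>e\<in>E. e \<subseteq> V \<and> card e = 2)"

definition nbhd :: "'a set set \<Rightarrow> 'a \<Rightarrow> 'a set" where
  "nbhd E w = {u. {w, u} \<in> E}"

definition degree :: "'a set set \<Rightarrow> 'a \<Rightarrow> nat" where
  "degree E w = card (nbhd E w)"

definition avg_degree :: "'a set \<Rightarrow> 'a set set \<Rightarrow> real" where
  "avg_degree V E = (\<Sum>v\<in>V. real (degree E v)) / real (card V)"

definition N_op :: "'a \<Rightarrow> 'a set set \<Rightarrow> 'a set set" where
  "N_op w E = {e \<in> E. e \<inter> nbhd E w = {}}"

end

theory Submission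
  imports Defs "HOL-Analysis.Convex"
begin

text \<open>Applying N_op w deletes every edge meeting the closed neighbourhood {w} \<union> \<Gamma>(w), and each
  edge contains at most two of its vertices, so at least (d(w) + \<Sum>{d(u) | u \<in> \<Gamma>(w)}) / 2 edges are
  deleted. Summed over w, every vertex u contributes d(u) once as w and d(u)^2 as a neighbour
  of its d(u) neighbours; the quadratic mean inequality bounds the mean of d(u)^2 below by
  the square of the average degree.\<close>

lemma simple_graph_finite_edges: "simple_graph V E \<Longrightarrow> finite E"
  unfolding simple_graph_def by (meson Pow_iff finite_Pow_iff rev_finite_subset subsetI)

lemma nbhd_subset: "simple_graph V E \<Longrightarrow> nbhd E w \<subseteq> V"
  unfolding simple_graph_def nbhd_def by auto

lemma not_mem_nbhd_self: "simple_graph V E \<Longrightarrow> w \<notin> nbhd E w"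
  unfolding simple_graph_def nbhd_def by fastforce

lemma mem_nbhd_commute: "u \<in> nbhd E w \<longleftrightarrow> w \<in> nbhd E u"
  unfolding nbhd_def by (simp add: insert_commute)

lemma edge_eq_doubleton_nbhd:
  assumes "simple_graph V E" "e \<in> E" "w \<in> e"
  obtains v where "e = {w, v}" "v \<in> nbhd E w"
proof -
  have "card e = 2" using assms by (auto simp: simple_graph_def)
  then obtain a b where "e = {a, b}" by (auto simp: card_2_iff)
  with assms(3) obtain v where "e = {w, v}" by (auto simp: insert_commute)
  with assms(2) show thesis by (intro that) (auto simp: nbhd_def)
qed

lemma degree_eq_card_incident_edges:
  assumes "simple_graph V E"
  shows "degree E u = card {e\<in>E. u \<in> e}"
  unfolding degree_def
proof (rule bij_betw_same_card[of "\<lambda>v. {u, v}"], rule bij_betwI')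
  fix x y assume "x \<in> nbhd E u" "y \<in> nbhd E u"
  then have "x \<noteq> u" "y \<noteq> u" using not_mem_nbhd_self[OF assms] by auto
  then show "({u, x} = {u, y}) = (x = y)" by (auto simp: doubleton_eq_iff)
next
  fix e assume "e \<in> {e\<in>E. u \<in> e}"
  then show "\<exists>x\<in>nbhd E u. e = {u, x}"
    by (auto elim: edge_eq_doubleton_nbhd[OF assms])
qed (auto simp: nbhd_def)

lemma sum_card_incident_eq_sum_card_Int:
  assumes "finite E" "finite S"
  shows "(\<Sum>u\<in>S. card {e\<in>E. u \<in> e}) = (\<Sum>e\<in>E. card (e \<inter> S))"
proof -
  have "(\<Sum>u\<in>S. card {e\<in>E. u \<in> e}) = (\<Sum>u\<in>S. \<Sum>e\<in>E. if u \<in> e then 1 else 0)"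
    using assms by (simp flip: sum.inter_filter)
  also have "\<dots> = (\<Sum>e\<in>E. \<Sum>u\<in>S. if u \<in> e then 1 else 0)"
    by (rule sum.swap)
  also have "\<dots> = (\<Sum>e\<in>E. card (e \<inter> S))"
    using assms by (simp flip: sum.inter_filter add: Int_def conj_commute)
  finally show ?thesis .
qed

lemma N_op_disjoint_closed_nbhd:
  assumes "simple_graph V E" "e \<in> N_op w E"
  shows "e \<inter> insert w (nbhd E w) = {}"
proof -
  have "e \<in> E" "e \<inter> nbhd E w = {}" using assms(2) by (auto simp: N_op_def)
  moreover have "w \<notin> e"
    using calculation by (auto elim: edge_eq_doubleton_nbhd[OF assms(1)])
  ultimately show ?thesis by auto
qed

lemma degree_plus_sum_nbhd_degree_le:
  assumes G: "simple_graph V E"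
  shows "degree E w + (\<Sum>u\<in>nbhd E w. degree E u) \<le> 2 * (card E - card (N_op w E))"
proof -
  let ?C = "insert w (nbhd E w)"
  let ?D = "E - N_op w E"
  have fin_E: "finite E" using simple_graph_finite_edges[OF G] .
  have fin_nbhd: "finite (nbhd E w)"
    using G nbhd_subset[OF G] by (meson finite_subset simple_graph_def)
  have "degree E w + (\<Sum>u\<in>nbhd E w. degree E u) = (\<Sum>u\<in>?C. card {e\<in>E. u \<in> e})"
    using fin_nbhd not_mem_nbhd_self[OF G] by (simp add: degree_eq_card_incident_edges[OF G])
  also have "\<dots> = (\<Sum>e\<in>E. card (e \<inter> ?C))"
    using fin_E fin_nbhd by (simp add: sum_card_incident_eq_sum_card_Int)
  also have "\<dots> = (\<Sum>e\<in>?D. card (e \<inter> ?C))"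
    using fin_E N_op_disjoint_closed_nbhd[OF G] by (intro sum.mono_neutral_right) auto
  also have "\<dots> \<le> (\<Sum>e\<in>?D. card e)"
    using G by (intro sum_mono card_mono) (auto simp: simple_graph_def intro: card_ge_0_finite)
  also have "\<dots> = 2 * card ?D"
    using G by (simp add: simple_graph_def)
  also have "card ?D = card E - card (N_op w E)"
    using fin_E by (intro card_Diff_subset) (auto simp: N_op_def intro: finite_subset)
  finally show ?thesis .
qed

lemma sum_sum_nbhd_degree:
  assumes G: "simple_graph V E"
  shows "(\<Sum>w\<in>V. \<Sum>u\<in>nbhd E w. degree E u) = (\<Sum>u\<in>V. (degree E u)\<^sup>2)"
proof -
  have fin_V: "finite V" using G by (simp add: simple_graph_def)
  have nbhd_filter: "{u\<in>V. u \<in> nbhd E w} = nbhd E w" for w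
    using nbhd_subset[OF G] by auto
  have "(\<Sum>w\<in>V. \<Sum>u\<in>nbhd E w. degree E u)
        = (\<Sum>w\<in>V. \<Sum>u\<in>V. if u \<in> nbhd E w then degree E u else 0)"
    using fin_V by (simp add: nbhd_filter flip: sum.inter_filter)
  also have "\<dots> = (\<Sum>u\<in>V. \<Sum>w\<in>V. if w \<in> nbhd E u then degree E u else 0)"
    by (subst sum.swap) (simp add: mem_nbhd_commute)
  also have "\<dots> = (\<Sum>u\<in>V. (degree E u)\<^sup>2)"
    using fin_V by (simp add: nbhd_filter degree_def power2_eq_square flip: sum.inter_filter)
  finally show ?thesis .
qed

lemma sum_degree_plus_sum_degree_sq_le:
  assumes "simple_graph V E"
  shows "(\<Sum>w\<in>V. degree E w) + (\<Sum>w\<in>V. (degree E w)\<^sup>2)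
           \<le> 2 * (\<Sum>w\<in>V. card E - card (N_op w E))"
proof -
  have "(\<Sum>w\<in>V. degree E w + (\<Sum>u\<in>nbhd E w. degree E u))
          \<le> (\<Sum>w\<in>V. 2 * (card E - card (N_op w E)))"
    using degree_plus_sum_nbhd_degree_le[OF assms] by (rule sum_mono)
  then show ?thesis
    by (simp add: sum.distrib sum_sum_nbhd_degree[OF assms] sum_distrib_left)
qed

theorem lemma3p2:
  fixes V :: "'a set" and E :: "'a set set"
  assumes "simple_graph V E" and "V \<noteq> {}"
  shows "(\<Sum>w\<in>V. real (card E - card (N_op w E))) / real (card V)
           \<ge> (avg_degree V E + 1) * avg_degree V E / 2"
proof -
  let ?n = "real (card V)"
  let ?s = "\<Sum>w\<in>V. real (degree E w)"
  let ?q = "\<Sum>w\<in>V. (real (degree E w))\<^sup>2"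
  let ?D = "\<Sum>w\<in>V. real (card E - card (N_op w E))"
  have n_pos: "?n > 0"
    using assms by (simp add: simple_graph_def card_gt_0_iff)
  have deleted_bound: "?s + ?q \<le> 2 * ?D"
    using sum_degree_plus_sum_degree_sq_le[OF assms(1)]
    unfolding of_nat_le_iff[where 'a=real, symmetric]
    by (simp only: of_nat_add of_nat_mult of_nat_sum of_nat_power of_nat_numeral)
  have mean_sq: "?s\<^sup>2 / ?n \<le> ?q"
    using sum_squared_le_sum_of_squares n_pos by (simp add: divide_le_eq)
  have "(avg_degree V E + 1) * avg_degree V E / 2 = (?s + ?s\<^sup>2 / ?n) / (2 * ?n)"
    using n_pos unfolding avg_degree_def by (simp add: field_simps power2_eq_square)
  also have "\<dots> \<le> (?s + ?q) / (2 * ?n)"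
    using mean_sq n_pos by (intro divide_right_mono add_left_mono) auto
  also have "\<dots> \<le> ?D / ?n"
    using deleted_bound n_pos by (simp add: divide_le_eq)
  finally show ?thesis .
qed

end
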